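(* Let $m\geq 2$, $h\geq 1$, and let $G=T^+_{m,h}$ with root $r$, stem $r'$, and extended subtrees $G_1,\ldots,G_m$. Let $S\subseteq V(G)\setminus\{r'\}$. If $S\cup\{r'\}$ is a power dominating set for $G$, then for every $i\in[m]$ the set $(S\cap V(G_i))\cup\{r\}$ is a power dominating set for $G_i$.
   Context: For a graph $G=(V,E)$ and $S\subseteq V$: $\mathcal{P}^0(S)=N[S]$ (closed neighborhood of $S$), and for $k\geq 1$, $\mathcal{P}^k(S)=\mathcal{P}^{k-1}(S)\cup N^*(\mathcal{P}^{k-1}(S))$, where $x\in N^*(A)$ iff there is $a\in A$ such that $x$ is the only neighbor of $a$ not in $A$. For finite $G$ this stabilizes at $\mathcal{P}^\infty(S)$; $S$ is a power dominating set for $G$ if $\mathcal{P}^\infty(S)=V$. $T_{m,h}$ denotes the complete $m$-ary tree of height $h$ (every non-leaf vertex has exactly $m$ children, all leaves at distance $h$ from the root), rooted at $r$. The extended $m$-ary tree $T^+_{m,h}$ is obtained from $T_{m,h}$ by adding a new vertex $r'$ (the stem) and the edge $\{r,r'\}$. For $G=T_{m,h}$ or $G=T^+_{m,h}$ with $h\ge 1$, let $r_1,\ldots,r_m$ be the children of $r$, let $V_i$ be the set of descendants of $r_i$, and let $G_i=G[V_i\cup\{r_i,r\}]$ be the $i$-th extended subtree; $G_i$ is an extended $m$-ary tree of height $h-1$ with root $r_i$ and stem $r$. *)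

theory Defs
  imports Main
begin

definition closed_nbhd :: "'a set \<Rightarrow> ('a \<Rightarrow> 'a \<Rightarrow> bool) \<Rightarrow> 'a set \<Rightarrow> 'a set" where
  "closed_nbhd V E S = S \<union> {v \<in> V. \<exists>s\<in>S. E s v}"

definition forced_nbrs :: "'a set \<Rightarrow> ('a \<Rightarrow> 'a \<Rightarrow> bool) \<Rightarrow> 'a set \<Rightarrow> 'a set" where
  "forced_nbrs V E A = {x \<in> V. \<exists>a\<in>A. x \<notin> A \<and> E a x \<and> (\<forall>y\<in>V. E a y \<and> y \<notin> A \<longrightarrow> y = x)}"

fun pd_step :: "'a set \<Rightarrow> ('a \<Rightarrow> 'a \<Rightarrow> bool) \<Rightarrow> 'a set \<Rightarrow> nat \<Rightarrow> 'a set" where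
  "pd_step V E S 0 = closed_nbhd V E S"
| "pd_step V E S (Suc k) = pd_step V E S k \<union> forced_nbrs V E (pd_step V E S k)"

definition pd_closure :: "'a set \<Rightarrow> ('a \<Rightarrow> 'a \<Rightarrow> bool) \<Rightarrow> 'a set \<Rightarrow> 'a set" where
  "pd_closure V E S = (\<Union>k. pd_step V E S k)"

definition power_dominating :: "'a set \<Rightarrow> ('a \<Rightarrow> 'a \<Rightarrow> bool) \<Rightarrow> 'a set \<Rightarrow> bool" where
  "power_dominating V E S \<longleftrightarrow> S \<subseteq> V \<and> pd_closure V E S = V"

definition induced_adj :: "('a \<Rightarrow> 'a \<Rightarrow> bool) \<Rightarrow> 'a set \<Rightarrow> 'a \<Rightarrow> 'a \<Rightarrow> bool" where
  "induced_adj E W u v \<longleftrightarrow> u \<in> W \<and> v \<in> W \<and> E u v"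

text \<open>Vertices: \<open>Some xs\<close> for a word xs over {0..<m} of length \<le> h (the word
  is the path from the root; root r = Some []), and the stem r' = None.\<close>

definition ext_tree_V :: "nat \<Rightarrow> nat \<Rightarrow> nat list option set" where
  "ext_tree_V m h = insert None (Some ` {xs. length xs \<le> h \<and> set xs \<subseteq> {..<m}})"

definition tree_root :: "nat list option" where "tree_root = Some []"
definition tree_stem :: "nat list option" where "tree_stem = None"

definition ext_tree_E :: "nat \<Rightarrow> nat \<Rightarrow> nat list option \<Rightarrow> nat list option \<Rightarrow> bool" where
  "ext_tree_E m h u v \<longleftrightarrow> u \<in> ext_tree_V m h \<and> v \<in> ext_tree_V m h \<and>
     ((u = tree_stem \<and> v = tree_root) \<or> (v = tree_stem \<and> u = tree_root) \<or>
      (\<exists>xs j. u = Some xs \<and> v = Some (xs @ [j])) \<or>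
      (\<exists>xs j. v = Some xs \<and> u = Some (xs @ [j])))"

text \<open>The i-th child of the root (children indexed 0..m-1), its set of
  descendants V_i, and the vertex set of the i-th extended subtree G_i.\<close>
definition root_child :: "nat \<Rightarrow> nat list option" where "root_child i = Some [i]"

definition descendants_V :: "nat \<Rightarrow> nat \<Rightarrow> nat \<Rightarrow> nat list option set" where
  "descendants_V m h i = {Some (i # ys) | ys. ys \<noteq> [] \<and> Suc (length ys) \<le> h \<and> set ys \<subseteq> {..<m}}"

definition ext_subtree_V :: "nat \<Rightarrow> nat \<Rightarrow> nat \<Rightarrow> nat list option set" where
  "ext_subtree_V m h i = descendants_V m h i \<union> {root_child i, tree_root}"

definition ext_subtree_E :: "nat \<Rightarrow> nat \<Rightarrow> nat \<Rightarrow> nat list option \<Rightarrow> nat list option \<Rightarrow> bool" where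
  "ext_subtree_E m h i = induced_adj (ext_tree_E m h) (ext_subtree_V m h i)"

end

theory Submission
  imports Defs
begin

text \<open>Every vertex of \<open>G\<^sub>i\<close> other than the root has all its neighbours inside \<open>G\<^sub>i\<close>, so
  the root is the only place where information observed in the rest of \<open>T\<^sup>+\<^sub>m\<^sub>,\<^sub>h\<close> can
  enter \<open>G\<^sub>i\<close>. Hence, by induction on the propagation rounds, everything that
  \<open>S \<union> {r'}\<close> observes inside \<open>G\<^sub>i\<close> is also observed by \<open>(S \<inter> V(G\<^sub>i)) \<union> {r}\<close> in \<open>G\<^sub>i\<close>:
  the root is observed from the start, a vertex dominated or forced from outside
  \<open>G\<^sub>i\<close> must be the root, and a force by a vertex of \<open>G\<^sub>i\<close> can be replayed in \<open>G\<^sub>i\<close>,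
  since its other neighbours all lie in \<open>G\<^sub>i\<close> and were observed earlier.\<close>

lemma pd_step_mono: "k \<le> l \<Longrightarrow> pd_step V E S k \<subseteq> pd_step V E S l"
  by (rule lift_Suc_mono_le[of "pd_step V E S"]) auto

lemma pd_step_subset: "S \<subseteq> V \<Longrightarrow> pd_step V E S k \<subseteq> V"
  by (induction k) (auto simp: closed_nbhd_def forced_nbrs_def)

lemma pd_closure_subset: "S \<subseteq> V \<Longrightarrow> pd_closure V E S \<subseteq> V"
  unfolding pd_closure_def using pd_step_subset by blast

lemma closed_nbhd_subset_pd_closure: "closed_nbhd V E S \<subseteq> pd_closure V E S"
  unfolding pd_closure_def by (metis UNIV_I UN_upper pd_step.simps(1))

lemma finite_subset_pd_closure_imp_pd_step:
  assumes "finite F" "F \<subseteq> pd_closure V E S"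
  shows "\<exists>k. F \<subseteq> pd_step V E S k"
  using assms
proof (induction F rule: finite_induct)
  case empty
  then show ?case by simp
next
  case (insert y F)
  then obtain k l where "F \<subseteq> pd_step V E S k" "y \<in> pd_step V E S l"
    unfolding pd_closure_def by auto
  then have "insert y F \<subseteq> pd_step V E S (max k l)"
    using pd_step_mono[of k "max k l" V E S] pd_step_mono[of l "max k l" V E S] by auto
  then show ?case by blast
qed

lemma pd_closure_forced:
  assumes "finite V" "a \<in> pd_closure V E S" "x \<in> V" "E a x"
    and others: "\<And>y. y \<in> V \<Longrightarrow> E a y \<Longrightarrow> y \<noteq> x \<Longrightarrow> y \<in> pd_closure V E S"
  shows "x \<in> pd_closure V E S"
proof -
  let ?F = "insert a {y \<in> V. E a y \<and> y \<noteq> x}"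
  have "finite ?F"
    using \<open>finite V\<close> by simp
  moreover have "?F \<subseteq> pd_closure V E S"
    using assms(2) others by auto
  ultimately obtain k where k: "?F \<subseteq> pd_step V E S k"
    by (blast dest: finite_subset_pd_closure_imp_pd_step)
  have "x \<in> pd_step V E S (Suc k)"
  proof (cases "x \<in> pd_step V E S k")
    case False
    have "a \<in> pd_step V E S k"
      using k by blast
    moreover have "\<forall>y\<in>V. E a y \<and> y \<notin> pd_step V E S k \<longrightarrow> y = x"
      using k by blast
    ultimately have "x \<in> forced_nbrs V E (pd_step V E S k)"
      using False assms(3,4) unfolding forced_nbrs_def by blast
    then show ?thesis by simp
  qed simp
  then show ?thesis
    unfolding pd_closure_def by blast
qed

lemma closed_nbhd_inter_subset_pd_closure_port:
  assumes "r \<in> W"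
    and port: "\<And>a x. E a x \<Longrightarrow> a \<notin> W \<Longrightarrow> x \<in> W \<Longrightarrow> x = r"
  shows "closed_nbhd V E S \<inter> W \<subseteq> pd_closure W (induced_adj E W) ((S \<inter> W) \<union> {r})"
proof
  let ?N = "closed_nbhd W (induced_adj E W) ((S \<inter> W) \<union> {r})"
  fix x assume x: "x \<in> closed_nbhd V E S \<inter> W"
  have "x \<in> ?N"
  proof -
    consider "x \<in> S" | s where "s \<in> S" "E s x"
      using x unfolding closed_nbhd_def by blast
    then show ?thesis
    proof cases
      case (2 s)
      show ?thesis
      proof (cases "s \<in> W")
        case True
        with 2 x show ?thesis
          unfolding closed_nbhd_def induced_adj_def by blast
      next
        case False
        with 2 x port have "x = r" by blast
        then show ?thesis
          unfolding closed_nbhd_def by blast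
      qed
    qed (use x in \<open>simp add: closed_nbhd_def\<close>)
  qed
  then show "x \<in> pd_closure W (induced_adj E W) ((S \<inter> W) \<union> {r})"
    by (rule subsetD[OF closed_nbhd_subset_pd_closure])
qed

lemma forced_nbrs_inter_subset_pd_closure_port:
  assumes "finite W" "W \<subseteq> V" "r \<in> pd_closure W (induced_adj E W) T"
    and port: "\<And>a x. E a x \<Longrightarrow> a \<notin> W \<Longrightarrow> x \<in> W \<Longrightarrow> x = r"
    and observed: "A \<inter> W \<subseteq> pd_closure W (induced_adj E W) T"
  shows "forced_nbrs V E A \<inter> W \<subseteq> pd_closure W (induced_adj E W) T"
    (is "_ \<subseteq> ?C")
proof
  fix x assume x: "x \<in> forced_nbrs V E A \<inter> W"
  then obtain a where a: "a \<in> A" "E a x"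
    and unique: "\<forall>y\<in>V. E a y \<and> y \<notin> A \<longrightarrow> y = x"
    unfolding forced_nbrs_def by blast
  show "x \<in> ?C"
  proof (cases "a \<in> W")
    case True
    show ?thesis
    proof (rule pd_closure_forced[OF \<open>finite W\<close>])
      show "a \<in> ?C"
        using observed True a(1) by blast
      show "x \<in> W"
        using x by blast
      show "induced_adj E W a x"
        using True a(2) x unfolding induced_adj_def by blast
      fix y assume y: "y \<in> W" "induced_adj E W a y" "y \<noteq> x"
      with unique \<open>W \<subseteq> V\<close> have "y \<in> A"
        unfolding induced_adj_def by blast
      with y(1) observed show "y \<in> ?C" by blast
    qed
  next
    case False
    with a(2) x port have "x = r" by blast
    with \<open>r \<in> ?C\<close> show ?thesis by simp
  qed
qed

lemma pd_step_inter_subset_pd_closure_port: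
  assumes "finite W" "W \<subseteq> V" "r \<in> W"
    and port: "\<And>a x. E a x \<Longrightarrow> a \<notin> W \<Longrightarrow> x \<in> W \<Longrightarrow> x = r"
  shows "pd_step V E S k \<inter> W \<subseteq> pd_closure W (induced_adj E W) ((S \<inter> W) \<union> {r})"
proof (induction k)
  case 0
  show ?case
    using closed_nbhd_inter_subset_pd_closure_port[OF \<open>r \<in> W\<close> port] by simp
next
  case (Suc k)
  have "r \<in> closed_nbhd W (induced_adj E W) ((S \<inter> W) \<union> {r})"
    by (simp add: closed_nbhd_def)
  then have "r \<in> pd_closure W (induced_adj E W) ((S \<inter> W) \<union> {r})"
    by (rule subsetD[OF closed_nbhd_subset_pd_closure])
  from forced_nbrs_inter_subset_pd_closure_port[OF assms(1,2) this port Suc.IH]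
  show ?case
    unfolding pd_step.simps Int_Un_distrib2 by (rule Un_least[OF Suc.IH])
qed

lemma power_dominating_restrict_port:
  assumes "finite W" "W \<subseteq> V" "r \<in> W"
    and "\<And>a x. E a x \<Longrightarrow> a \<notin> W \<Longrightarrow> x \<in> W \<Longrightarrow> x = r"
    and "power_dominating V E S"
  shows "power_dominating W (induced_adj E W) ((S \<inter> W) \<union> {r})"
proof -
  let ?C = "pd_closure W (induced_adj E W) ((S \<inter> W) \<union> {r})"
  have "W \<subseteq> ?C"
  proof
    fix x assume "x \<in> W"
    with \<open>power_dominating V E S\<close> \<open>W \<subseteq> V\<close> obtain k where "x \<in> pd_step V E S k"
      unfolding power_dominating_def pd_closure_def by blast
    with \<open>x \<in> W\<close> show "x \<in> ?C"
      by (intro subsetD[OF pd_step_inter_subset_pd_closure_port[OF assms(1-4)]] IntI)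
  qed
  moreover have "(S \<inter> W) \<union> {r} \<subseteq> W"
    using \<open>r \<in> W\<close> by blast
  moreover from this have "?C \<subseteq> W"
    by (rule pd_closure_subset)
  ultimately show ?thesis
    unfolding power_dominating_def by blast
qed

lemma finite_ext_tree_V: "finite (ext_tree_V m h)"
proof -
  have "finite {xs. set xs \<subseteq> {..<m} \<and> length xs \<le> h}"
    by (rule finite_lists_length_le) auto
  then show ?thesis
    unfolding ext_tree_V_def by (simp add: conj_commute)
qed

lemma ext_subtree_V_eq:
  assumes "i < m" "h \<ge> 1"
  shows "ext_subtree_V m h i = {v \<in> ext_tree_V m h. v = Some [] \<or> (\<exists>ys. v = Some (i # ys))}"
proof (intro set_eqI iffI)
  fix v assume "v \<in> ext_subtree_V m h i"
  then show "v \<in> {v \<in> ext_tree_V m h. v = Some [] \<or> (\<exists>ys. v = Some (i # ys))}"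
    using assms
    by (auto simp: ext_subtree_V_def descendants_V_def root_child_def tree_root_def ext_tree_V_def)
next
  fix v assume v: "v \<in> {v \<in> ext_tree_V m h. v = Some [] \<or> (\<exists>ys. v = Some (i # ys))}"
  then show "v \<in> ext_subtree_V m h i"
    by (cases "v = Some [i]")
      (auto simp: ext_subtree_V_def descendants_V_def root_child_def tree_root_def ext_tree_V_def)
qed

lemma ext_tree_E_into_ext_subtree:
  assumes "i < m" "h \<ge> 1" "ext_tree_E m h a x"
    and "a \<notin> ext_subtree_V m h i" "x \<in> ext_subtree_V m h i"
  shows "x = tree_root"
proof -
  have a: "a \<in> ext_tree_V m h" and x: "x = Some [] \<or> (\<exists>ys. x = Some (i # ys))"
    using assms ext_subtree_V_eq[OF assms(1,2)] by (auto simp: ext_tree_E_def)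
  have a_out: "a \<noteq> Some []" "\<And>ys. a \<noteq> Some (i # ys)"
    using assms(4) a ext_subtree_V_eq[OF assms(1,2)] by auto
  show ?thesis
    using assms(3) x a_out
    unfolding ext_tree_E_def tree_root_def tree_stem_def
    by (fastforce simp: Cons_eq_append_conv)
qed

theorem mainTheorem1:
  fixes m h :: nat and S :: "nat list option set"
  assumes "m \<ge> 2" and "h \<ge> 1"
    and "S \<subseteq> ext_tree_V m h - {tree_stem}"
    and "power_dominating (ext_tree_V m h) (ext_tree_E m h) (S \<union> {tree_stem})"
  shows "\<forall>i<m. power_dominating (ext_subtree_V m h i) (ext_subtree_E m h i)
                 ((S \<inter> ext_subtree_V m h i) \<union> {tree_root})"
proof (intro allI impI)
  fix i assume i: "i < m"
  note W_eq = ext_subtree_V_eq[OF i \<open>h \<ge> 1\<close>]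
  have W_sub: "ext_subtree_V m h i \<subseteq> ext_tree_V m h"
    using W_eq by blast
  have "power_dominating (ext_subtree_V m h i) (ext_subtree_E m h i)
          (((S \<union> {tree_stem}) \<inter> ext_subtree_V m h i) \<union> {tree_root})"
    unfolding ext_subtree_E_def
  proof (rule power_dominating_restrict_port[OF _ W_sub _ _ assms(4)])
    show "finite (ext_subtree_V m h i)"
      using W_sub finite_ext_tree_V by (rule finite_subset)
    show "tree_root \<in> ext_subtree_V m h i"
      by (simp add: ext_subtree_V_def)
  qed (use ext_tree_E_into_ext_subtree[OF i \<open>h \<ge> 1\<close>] in blast)
  moreover have "tree_stem \<notin> ext_subtree_V m h i"
    using W_eq by (simp add: tree_stem_def)
  ultimately show "power_dominating (ext_subtree_V m h i) (ext_subtree_E m h i)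
                     ((S \<inter> ext_subtree_V m h i) \<union> {tree_root})"
    by (simp add: Int_Un_distrib2)
qed

end
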